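(* Let $\mathcal{X}=\{1,\ldots,d\}$, let $\mathcal{S}$ be the probability simplex in $\mathbb{R}^d$ (identified with probability measures on $\mathcal{X}$), $\mathcal{S}^\circ=\{p\in\mathcal{S}:p_x>0\ \forall x\}$, and $\mathcal{H}_0=\{v\in\mathbb{R}^d:\sum_x v_x=0\}$. Let $K:\mathcal{X}\times\mathbb{R}^d\to\mathbb{R}$ be such that each $K^x(\cdot)=K(x,\cdot)$ is continuously differentiable on $\mathbb{R}^d$, and let $(\alpha(x,y))_{x,y\in\mathcal{X}}$ be an irreducible symmetric matrix with zero diagonal and off-diagonal entries in $\{0,1\}$. Define $$H^x(p)=K^x(p)+\sum_{z\in\mathcal{X}}\Big(\frac{\partial}{\partial p_x}K^z(p)\Big)p_z,\qquad \Psi(x,y,p)=H^y(p)-H^x(p),$$ $$\Gamma_{xy}(p)=e^{-(\Psi(x,y,p))^+}\alpha(x,y)\ (x\ne y),\qquad \Gamma_{xx}(p)=-\sum_{y\ne x}\Gamma_{xy}(p),$$ and $F(p)=\sum_{x\in\mathcal{X}}(K^x(p)+\log p_x)p_x$ for $p\in\mathcal{S}$. Let $p\in\mathcal{S}$. Then $p$ is a fixed point of the ODE $\frac{d}{dt}p(t)=p(t)\Gamma(p(t))$ (i.e. $p\Gamma(p)=0$) if and only if $p\in\mathcal{S}^\circ$ and $\frac{\partial}{\partial v}F(p)=0$ for all $v\in\mathcal{H}_0$.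
   Context: $\alpha$ irreducible means the graph on $\mathcal{X}$ with edges $\{x,y\}$ where $\alpha(x,y)=1$ is connected. For $p\in\mathcal{S}^\circ$ and $v\in\mathcal{H}_0$, $\frac{\partial}{\partial v}F(p)=\frac{d}{ds}F(p+sv)\big|_{s=0}$ denotes the directional derivative of $F$ (the formula defining $F$ makes sense for all vectors with positive entries). *)

theory Defs
  imports "HOL-Analysis.Analysis"
begin

text \<open>The state space X = {1..d} is modelled by a finite type 'n; vectors in R^d are
  real^'n.  K x q is K^x(q).\<close>

definition prob_simplex :: "(real^'n::finite) set" where
  "prob_simplex = {p. (\<forall>x. p $ x \<ge> 0) \<and> (\<Sum>x\<in>UNIV. p $ x) = 1}"

definition prob_simplex_interior :: "(real^'n::finite) set" where
  "prob_simplex_interior = {p. p \<in> prob_simplex \<and> (\<forall>x. p $ x > 0)}"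

definition H0 :: "(real^'n::finite) set" where
  "H0 = {v. (\<Sum>x\<in>UNIV. v $ x) = 0}"

definition partial :: "((real^'n::finite) \<Rightarrow> real) \<Rightarrow> 'n \<Rightarrow> real^'n \<Rightarrow> real" where
  "partial f i q = frechet_derivative f (at q) (axis i 1)"

definition Hf :: "('n::finite \<Rightarrow> real^'n \<Rightarrow> real) \<Rightarrow> 'n \<Rightarrow> real^'n \<Rightarrow> real" where
  "Hf K x p = K x p + (\<Sum>z\<in>UNIV. partial (K z) x p * p $ z)"

definition Psi :: "('n::finite \<Rightarrow> real^'n \<Rightarrow> real) \<Rightarrow> 'n \<Rightarrow> 'n \<Rightarrow> real^'n \<Rightarrow> real" where
  "Psi K x y p = Hf K y p - Hf K x p"

definition Gamma :: "('n::finite \<Rightarrow> real^'n \<Rightarrow> real) \<Rightarrow> ('n \<Rightarrow> 'n \<Rightarrow> real)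
    \<Rightarrow> real^'n \<Rightarrow> 'n \<Rightarrow> 'n \<Rightarrow> real" where
  "Gamma K \<alpha> p x y =
     (if x = y then - (\<Sum>y'\<in>UNIV - {x}. exp (- max 0 (Psi K x y' p)) * \<alpha> x y')
      else exp (- max 0 (Psi K x y p)) * \<alpha> x y)"

definition Ffun :: "('n::finite \<Rightarrow> real^'n \<Rightarrow> real) \<Rightarrow> real^'n \<Rightarrow> real" where
  "Ffun K p = (\<Sum>x\<in>UNIV. (K x p + ln (p $ x)) * p $ x)"

definition irreducible_adj :: "('n \<Rightarrow> 'n \<Rightarrow> real) \<Rightarrow> bool" where
  "irreducible_adj \<alpha> = (\<forall>x y. (x, y) \<in> {(a, b). \<alpha> a b = 1}\<^sup>*)"

definition is_fixed_point :: "('n::finite \<Rightarrow> real^'n \<Rightarrow> real) \<Rightarrow> ('n \<Rightarrow> 'n \<Rightarrow> real)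
    \<Rightarrow> real^'n \<Rightarrow> bool" where
  "is_fixed_point K \<alpha> p = (\<forall>y. (\<Sum>x\<in>UNIV. p $ x * Gamma K \<alpha> p x y) = 0)"

end

theory Submission
  imports Defs
begin

text \<open>Put \<open>h(x) = p(x) exp (H\<^sup>x(p))\<close>. Since \<open>-(H\<^sup>y - H\<^sup>x)\<^sup>+ = H\<^sup>x - max H\<^sup>x H\<^sup>y\<close>, the
  \<open>y\<close>-th entry of \<open>p \<Gamma>(p)\<close> is \<open>\<Sum>\<^sub>x c(x,y) (h(x) - h(y))\<close> with symmetric weights
  \<open>c(x,y) = exp (- max H\<^sup>x H\<^sup>y) \<alpha>(x,y)\<close>, positive exactly on the edges of the connected graph
  of \<open>\<alpha>\<close>. By the maximum principle \<open>p\<close> is a fixed point iff \<open>h\<close> is constant; since \<open>p\<close> is a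
  probability vector the constant is positive, so \<open>p\<close> is interior. At an interior point the
  derivative of \<open>F\<close> along \<open>v\<close> is \<open>\<Sum>\<^sub>w v(w) (H\<^sup>w(p) + log p(w) + 1)\<close>, which vanishes on
  \<open>\<H>\<^sub>0\<close> iff \<open>H\<^sup>w(p) + log p(w) = log h(w)\<close> is constant.\<close>

lemma linear_eq_sum_axis:
  fixes f :: "real^'n::finite \<Rightarrow> real"
  assumes "linear f"
  shows "f v = (\<Sum>w\<in>UNIV. v$w * f (axis w 1))"
proof -
  have "f v = f (\<Sum>w\<in>UNIV. v$w *\<^sub>R axis w 1)"
    using basis_expansion[of v] by (simp add: scalar_mult_eq_scaleR)
  also have "\<dots> = (\<Sum>w\<in>UNIV. v$w * f (axis w 1))"
    by (simp add: linear_sum[OF assms] linear_scale[OF assms])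
  finally show ?thesis .
qed

lemma has_real_derivative_along_line:
  fixes g :: "real^'n::finite \<Rightarrow> real"
  assumes "g differentiable (at p)"
  shows "((\<lambda>s. g (p + s *\<^sub>R v)) has_real_derivative (\<Sum>w\<in>UNIV. v$w * partial g w p)) (at 0)"
proof -
  let ?g' = "frechet_derivative g (at p)"
  have g': "(g has_derivative ?g') (at p)"
    using assms frechet_derivative_works by blast
  then have "linear ?g'"
    using has_derivative_linear by blast
  then have g'_line: "?g' (s *\<^sub>R v) = (\<Sum>w\<in>UNIV. v$w * partial g w p) * s" for s
    by (simp add: linear_scale linear_eq_sum_axis[of ?g' v] partial_def mult.commute)
  have "((\<lambda>s::real. p + s *\<^sub>R v) has_derivative (\<lambda>s. s *\<^sub>R v)) (at 0)"
    by (auto intro!: derivative_eq_intros)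
  from diff_chain_at[OF this, of g] g'
  have "((\<lambda>s. g (p + s *\<^sub>R v)) has_derivative (\<lambda>s. ?g' (s *\<^sub>R v))) (at 0)"
    by (simp add: o_def)
  then show ?thesis
    unfolding has_field_derivative_def g'_line .
qed

lemma Ffun_has_real_derivative_along_line:
  fixes K :: "'n::finite \<Rightarrow> real^'n \<Rightarrow> real"
  assumes K_diff: "\<And>x. K x differentiable (at p)" and p_pos: "\<And>x. p$x > 0"
  shows "((\<lambda>s. Ffun K (p + s *\<^sub>R v)) has_real_derivative
           (\<Sum>w\<in>UNIV. v$w * (Hf K w p + ln (p$w) + 1))) (at 0)"
proof -
  define D where "D x = (\<Sum>w\<in>UNIV. v$w * partial (K x) w p)" for x
  have summand: "((\<lambda>s. (K x (p + s *\<^sub>R v) + ln ((p + s *\<^sub>R v)$x)) * (p + s *\<^sub>R v)$x)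
      has_real_derivative D x * p$x + v$x * (K x p + ln (p$x) + 1)) (at 0)" for x
  proof -
    have "((\<lambda>s. K x (p + s *\<^sub>R v)) has_real_derivative D x) (at 0)"
      unfolding D_def by (rule has_real_derivative_along_line[OF K_diff])
    then have "((\<lambda>s. (K x (p + s *\<^sub>R v) + ln ((p + s *\<^sub>R v)$x)) * (p + s *\<^sub>R v)$x)
        has_real_derivative (D x + v$x / p$x) * p$x + v$x * (K x p + ln (p$x))) (at 0)"
      using p_pos[of x] by (auto intro!: derivative_eq_intros)
    moreover have "(D x + v$x / p$x) * p$x + v$x * (K x p + ln (p$x))
        = D x * p$x + v$x * (K x p + ln (p$x) + 1)"
      using p_pos[of x] by (simp add: field_simps)
    ultimately show ?thesis
      by (rule DERIV_cong)
  qed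
  have "(\<Sum>x\<in>UNIV. D x * p$x) = (\<Sum>w\<in>UNIV. v$w * (\<Sum>z\<in>UNIV. partial (K z) w p * p$z))"
    unfolding D_def sum_distrib_left sum_distrib_right
    by (subst sum.swap) (simp add: mult.commute mult.left_commute)
  then have "(\<Sum>x\<in>UNIV. D x * p$x + v$x * (K x p + ln (p$x) + 1))
      = (\<Sum>w\<in>UNIV. v$w * (Hf K w p + ln (p$w) + 1))"
    by (simp add: sum.distrib Hf_def algebra_simps)
  moreover have "((\<lambda>s. Ffun K (p + s *\<^sub>R v)) has_real_derivative
      (\<Sum>x\<in>UNIV. D x * p$x + v$x * (K x p + ln (p$x) + 1))) (at 0)"
    unfolding Ffun_def by (intro DERIV_sum summand)
  ultimately show ?thesis
    by simp
qed

lemma sum_mult_H0_eq_0_iff_const: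
  fixes g :: "'n::finite \<Rightarrow> real"
  shows "(\<forall>v\<in>H0. (\<Sum>w\<in>UNIV. v$w * g w) = 0) \<longleftrightarrow> (\<forall>a b. g a = g b)"
proof
  assume orth: "\<forall>v\<in>H0. (\<Sum>w\<in>UNIV. v$w * g w) = 0"
  show "\<forall>a b. g a = g b"
  proof (intro allI)
    fix a b
    define v :: "real^'n" where "v = axis a 1 - axis b 1"
    have v_nth: "v$w = (if w = a then 1 else 0) - (if w = b then 1 else 0)" for w
      by (simp add: v_def axis_def)
    have "v \<in> H0"
      by (simp add: H0_def v_nth sum_subtractf)
    moreover have "v$w * g w = (if w = a then g w else 0) - (if w = b then g w else 0)" for w
      by (simp add: v_nth)
    then have "(\<Sum>w\<in>UNIV. v$w * g w) = g a - g b"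
      by (simp add: sum_subtractf)
    ultimately show "g a = g b"
      using orth by simp
  qed
next
  assume const: "\<forall>a b. g a = g b"
  show "\<forall>v\<in>H0. (\<Sum>w\<in>UNIV. v$w * g w) = 0"
  proof
    fix v :: "real^'n"
    assume "v \<in> H0"
    have "(\<Sum>w\<in>UNIV. v$w * g w) = (\<Sum>w\<in>UNIV. v$w * g undefined)"
      using const by (intro sum.cong) auto
    also have "\<dots> = (\<Sum>w\<in>UNIV. v$w) * g undefined"
      by (simp add: sum_distrib_right)
    also have "\<dots> = 0"
      using \<open>v \<in> H0\<close> by (simp add: H0_def)
    finally show "(\<Sum>w\<in>UNIV. v$w * g w) = 0" .
  qed
qed

lemma Ffun_stationary_iff:
  fixes K :: "'n::finite \<Rightarrow> real^'n \<Rightarrow> real"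
  assumes K_diff: "\<And>x. K x differentiable (at p)" and p_pos: "\<And>x. p$x > 0"
  shows "(\<forall>v\<in>H0. ((\<lambda>s. Ffun K (p + s *\<^sub>R v)) has_real_derivative 0) (at 0))
     \<longleftrightarrow> (\<forall>a b. Hf K a p + ln (p$a) = Hf K b p + ln (p$b))"
proof -
  define g where "g w = Hf K w p + ln (p$w) + 1" for w
  have "((\<lambda>s. Ffun K (p + s *\<^sub>R v)) has_real_derivative 0) (at 0)
      \<longleftrightarrow> (\<Sum>w\<in>UNIV. v$w * g w) = 0" for v
  proof -
    have "((\<lambda>s. Ffun K (p + s *\<^sub>R v)) has_real_derivative (\<Sum>w\<in>UNIV. v$w * g w)) (at 0)"
      unfolding g_def by (rule Ffun_has_real_derivative_along_line[OF K_diff p_pos])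
    then show ?thesis
      using DERIV_unique by auto
  qed
  then show ?thesis
    using sum_mult_H0_eq_0_iff_const[of g] by (simp add: g_def)
qed

lemma p_Gamma_eq_flux_sum:
  fixes K :: "'n::finite \<Rightarrow> real^'n \<Rightarrow> real" and p :: "real^'n"
  assumes \<alpha>_sym: "\<And>x y. \<alpha> x y = \<alpha> y x"
  defines "c \<equiv> \<lambda>x y. exp (- max (Hf K x p) (Hf K y p)) * \<alpha> x y"
    and "h \<equiv> \<lambda>x. p$x * exp (Hf K x p)"
  shows "(\<Sum>x\<in>UNIV. p$x * Gamma K \<alpha> p x y) = (\<Sum>x\<in>UNIV. c x y * (h x - h y))"
proof -
  have "- max 0 (Psi K x y p) = Hf K x p - max (Hf K x p) (Hf K y p)" for x y
    by (simp add: Psi_def max_def)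
  then have rate: "p$x * (exp (- max 0 (Psi K x y p)) * \<alpha> x y) = h x * c x y" for x y
    unfolding h_def c_def by (simp add: exp_diff exp_minus field_simps)
  have c_sym: "c x y = c y x" for x y
    unfolding c_def by (simp add: \<alpha>_sym max.commute)
  have "(\<Sum>x\<in>UNIV. p$x * Gamma K \<alpha> p x y)
      = p$y * Gamma K \<alpha> p y y + (\<Sum>x\<in>UNIV - {y}. p$x * Gamma K \<alpha> p x y)"
    by (simp add: sum.remove[of UNIV y])
  also have "\<dots> = - (\<Sum>x\<in>UNIV - {y}. h y * c x y) + (\<Sum>x\<in>UNIV - {y}. h x * c x y)"
    by (simp add: Gamma_def sum_distrib_left rate c_sym[of y])
  also have "\<dots> = (\<Sum>x\<in>UNIV - {y}. c x y * (h x - h y))"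
    by (simp add: sum_subtractf[symmetric] algebra_simps)
  also have "\<dots> = (\<Sum>x\<in>UNIV. c x y * (h x - h y))"
    by (simp add: sum.remove[of UNIV y])
  finally show ?thesis .
qed

lemma balanced_flux_imp_const:
  fixes c :: "'a::finite \<Rightarrow> 'a \<Rightarrow> real" and h :: "'a \<Rightarrow> real"
  assumes c_nonneg: "\<And>x y. c x y \<ge> 0"
    and c_pos: "\<And>x y. (x, y) \<in> E \<Longrightarrow> c y x > 0"
    and connected: "\<And>x y. (x, y) \<in> E\<^sup>*"
    and balanced: "\<And>y. (\<Sum>x\<in>UNIV. c x y * (h x - h y)) = 0"
  shows "h a = h b"
proof -
  define m where "m = Max (range h)"
  have h_le: "h x \<le> m" for x
    unfolding m_def by simp
  have "m \<in> range h"
    unfolding m_def by (rule Max_in) auto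
  then obtain x0 where x0: "h x0 = m"
    by auto
  have max_step: "h b = m" if "h a = m" and "(a, b) \<in> E" for a b
  proof -
    have "(\<Sum>x\<in>UNIV. c x a * (m - h x)) = 0"
      using balanced[of a] \<open>h a = m\<close> by (simp add: right_diff_distrib sum_subtractf)
    then have "c b a * (m - h b) = 0"
      using sum_nonneg_eq_0_iff[of UNIV "\<lambda>x. c x a * (m - h x)"] c_nonneg h_le by simp
    then show ?thesis
      using c_pos[OF \<open>(a, b) \<in> E\<close>] by simp
  qed
  have "h x = m" for x
    using connected[of x0 x]
    by (induction rule: rtrancl_induct) (use x0 max_step in auto)
  then show ?thesis
    by simp
qed

lemma is_fixed_point_iff_const:
  fixes K :: "'n::finite \<Rightarrow> real^'n \<Rightarrow> real"
  assumes \<alpha>_01: "\<And>x y. \<alpha> x y \<in> {0, 1}"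
    and \<alpha>_sym: "\<And>x y. \<alpha> x y = \<alpha> y x"
    and \<alpha>_irr: "irreducible_adj \<alpha>"
  shows "is_fixed_point K \<alpha> p \<longleftrightarrow> (\<forall>a b. p$a * exp (Hf K a p) = p$b * exp (Hf K b p))"
proof -
  define c where "c \<equiv> \<lambda>x y. exp (- max (Hf K x p) (Hf K y p)) * \<alpha> x y"
  define h where "h \<equiv> \<lambda>x. p$x * exp (Hf K x p)"
  have fixed_iff: "is_fixed_point K \<alpha> p \<longleftrightarrow> (\<forall>y. (\<Sum>x\<in>UNIV. c x y * (h x - h y)) = 0)"
    unfolding is_fixed_point_def c_def h_def using p_Gamma_eq_flux_sum[where \<alpha> = \<alpha>, OF \<alpha>_sym] by simp
  have "(\<forall>y. (\<Sum>x\<in>UNIV. c x y * (h x - h y)) = 0) \<longleftrightarrow> (\<forall>a b. h a = h b)"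
  proof
    assume "\<forall>y. (\<Sum>x\<in>UNIV. c x y * (h x - h y)) = 0"
    moreover have "c x y \<ge> 0" for x y
      using \<alpha>_01[of x y] by (auto simp: c_def)
    moreover have "c y x > 0" if "(x, y) \<in> {(a, b). \<alpha> a b = 1}" for x y
      using that \<alpha>_sym[of x y] by (simp add: c_def)
    ultimately show "\<forall>a b. h a = h b"
      using balanced_flux_imp_const[where E = "{(a, b). \<alpha> a b = 1}"] \<alpha>_irr
      unfolding irreducible_adj_def by blast
  next
    assume const: "\<forall>a b. h a = h b"
    have "c x y * (h x - h y) = 0" for x y
      using const by simp
    then show "\<forall>y. (\<Sum>x\<in>UNIV. c x y * (h x - h y)) = 0"
      by (intro allI sum.neutral) blast
  qed
  then show ?thesis
    unfolding fixed_iff h_def .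
qed

lemma weighted_const_iff_log_const:
  fixes p :: "'a \<Rightarrow> real"
  assumes "p a > 0" and "p b > 0"
  shows "p a * exp (u a) = p b * exp (u b) \<longleftrightarrow> u a + ln (p a) = u b + ln (p b)"
proof -
  have "p x * exp (u x) = exp (u x + ln (p x))" if "p x > 0" for x
    using that by (simp add: exp_add)
  then show ?thesis
    using assms by simp
qed

lemma prob_simplex_pos_if_weighted_const:
  fixes p :: "real^'n::finite"
  assumes "p \<in> prob_simplex" and const: "\<And>a b. p$a * exp (u a) = p$b * exp (u b)"
  shows "p$x > 0"
proof (rule ccontr)
  assume "\<not> p$x > 0"
  with assms(1) have "p$x = 0"
    by (simp add: prob_simplex_def not_less order_antisym)
  then have "p$y = 0" for y
    using const[of y x] by simp
  with assms(1) show False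
    by (simp add: prob_simplex_def)
qed

theorem theorem4p1:
  fixes K :: "'n::finite \<Rightarrow> real^'n \<Rightarrow> real"
    and \<alpha> :: "'n \<Rightarrow> 'n \<Rightarrow> real"
    and p :: "real^'n"
  assumes K_diff: "\<And>x q. K x differentiable (at q)"
    and K_C1: "\<And>x i. continuous_on UNIV (partial (K x) i)"
    and \<alpha>_01: "\<And>x y. \<alpha> x y \<in> {0, 1}"
    and \<alpha>_sym: "\<And>x y. \<alpha> x y = \<alpha> y x"
    and \<alpha>_diag: "\<And>x. \<alpha> x x = 0"
    and \<alpha>_irr: "irreducible_adj \<alpha>"
    and p_S: "p \<in> prob_simplex"
  shows "is_fixed_point K \<alpha> p \<longleftrightarrow>
         (p \<in> prob_simplex_interior \<and>
          (\<forall>v\<in>H0. ((\<lambda>s. Ffun K (p + s *\<^sub>R v)) has_real_derivative 0) (at 0)))"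
proof -
  let ?h_const = "\<forall>a b. p$a * exp (Hf K a p) = p$b * exp (Hf K b p)"
  have "?h_const \<longleftrightarrow> (\<forall>x. p$x > 0) \<and> (\<forall>a b. Hf K a p + ln (p$a) = Hf K b p + ln (p$b))"
    using prob_simplex_pos_if_weighted_const[OF p_S, where u = "\<lambda>x. Hf K x p"]
      weighted_const_iff_log_const[where p = "\<lambda>x. p$x" and u = "\<lambda>x. Hf K x p"]
    by blast
  also have "\<dots> \<longleftrightarrow> p \<in> prob_simplex_interior \<and>
      (\<forall>v\<in>H0. ((\<lambda>s. Ffun K (p + s *\<^sub>R v)) has_real_derivative 0) (at 0))"
    using Ffun_stationary_iff[where K = K and p = p, OF K_diff] p_S
    unfolding prob_simplex_interior_def by blast
  finally show ?thesis
    using is_fixed_point_iff_const[OF \<alpha>_01 \<alpha>_sym \<alpha>_irr] by simp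
qed

end
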